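(* Let $M\in S_d^+$, let $\mathcal T$ be an $M$-reduced mesh with associated Hopf–Lax operator $\Lambda$, and fix $T\in\mathcal T$ with non-zero vertices $v_1,\dots,v_d$. Define $\delta_+:\mathbb Z^d\to\mathbb R_+\cup\{\infty\}$ by $\delta_+(z):=\infty$ if $-z\notin\mathbb R_+T:=\{rx;\ r\ge0,\ x\in T\}$, and otherwise, writing $z+\beta_1v_1+\dots+\beta_dv_d=0$ with $\beta_i\in\mathbb Z_{\ge0}$, $$\delta_+(z):=\|z\|_M+(\sin\theta_M(T))^2\sum_{i=1}^d s(\beta_i)\|v_i\|_M,\qquad s(\beta):=\sum_{k=1}^{\beta}\frac1k.$$ Then $\delta_+$ is a discrete super-solution.
   Context: $S_d^+$ is the set of $d\times d$ symmetric positive definite matrices; $\langle u,v\rangle_M:=u^TMv$, $\|u\|_M:=\sqrt{\langle u,u\rangle_M}$. An $M$-reduced mesh is a finite conforming mesh $\mathcal T$ of simplices in $\mathbb R^d$ such that: (I) the union of its simplices is a neighborhood of the origin; (II) the vertices of each $T\in\mathcal T$ lie in $\mathbb Z^d$ and $T$ has volume $1/d!$; (III) each $T\in\mathcal T$ has the origin as a vertex, and its other vertices $v_1,\dots,v_d$ satisfy $\langle v_i,v_j\rangle_M\ge0$ for all $i,j$. (When $-z\in\mathbb R_+T$ with $z\in\mathbb Z^d$, the $v_i$ form a basis of $\mathbb Z^d$, so the nonnegative integers $\beta_i$ exist and are unique.) The angle $\theta_M(T)\in[0,\pi]$ is given by $\cos\theta_M(T):=\min_{u,v\in T\setminus\{0\}}\frac{\langle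 u,v\rangle_M}{\|u\|_M\|v\|_M}$. For $\delta:\mathbb Z^d\to\mathbb R_+\cup\{\infty\}$ and $z\in\mathbb Z^d$, $\Lambda(\delta,z):=\min\{\|\sum_{i=1}^k\alpha_iw_i\|_M+\sum_{i=1}^k\alpha_i\delta(z+w_i)\}$ over $1\le k\le d$, $\alpha_i\ge0$ with $\sum_i\alpha_i=1$, and non-zero vertices $w_1,\dots,w_k$ of a common simplex of $\mathcal T$ (convention $0\times\infty=0$). A map $\delta$ is a super-solution if $\delta(0)=0$ and $\delta(z)\ge\Lambda(\delta,z)$ for all $z\in\mathbb Z^d\setminus\{0\}$. *)

theory Defs
  imports "HOL-Analysis.Analysis"
begin

text \<open>Points of R^d are vectors of type real^'d; Z^d is the set of lattice points.
  A simplex of the mesh is represented by its (finite) set of vertices S;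
  the geometric simplex is convex hull S.\<close>

definition Mip :: "real^'d^'d \<Rightarrow> real^'d \<Rightarrow> real^'d \<Rightarrow> real" where
  "Mip M u v = u \<bullet> (M *v v)"

definition Mnorm :: "real^'d^'d \<Rightarrow> real^'d \<Rightarrow> real" where
  "Mnorm M u = sqrt (Mip M u u)"

definition sym_posdef :: "real^'d^'d \<Rightarrow> bool" where
  "sym_posdef M \<longleftrightarrow> transpose M = M \<and> (\<forall>x. x \<noteq> 0 \<longrightarrow> Mip M x x > 0)"

definition lattice_pt :: "real^'d \<Rightarrow> bool" where
  "lattice_pt z \<longleftrightarrow> (\<forall>i. z $ i \<in> \<int>)"

definition M_reduced_mesh :: "real^'d^'d \<Rightarrow> (real^'d) set set \<Rightarrow> bool" where
  "M_reduced_mesh M \<T> \<longleftrightarrow>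
     finite \<T>
   \<and> (\<forall>S\<in>\<T>. finite S \<and> card S = CARD('d) + 1 \<and> \<not> affine_dependent S)
   \<and> (\<forall>S1\<in>\<T>. \<forall>S2\<in>\<T>. convex hull S1 \<inter> convex hull S2 = convex hull (S1 \<inter> S2))
   \<and> 0 \<in> interior (\<Union>S\<in>\<T>. convex hull S)
   \<and> (\<forall>S\<in>\<T>. (\<forall>v\<in>S. lattice_pt v) \<and> measure lebesgue (convex hull S) = 1 / fact CARD('d))
   \<and> (\<forall>S\<in>\<T>. 0 \<in> S \<and> (\<forall>v\<in>S - {0}. \<forall>w\<in>S - {0}. Mip M v w \<ge> 0))"

definition cos_angleM :: "real^'d^'d \<Rightarrow> (real^'d) set \<Rightarrow> real" where
  "cos_angleM M T = Inf {Mip M u v / (Mnorm M u * Mnorm M v) | u v.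
       u \<in> convex hull T - {0} \<and> v \<in> convex hull T - {0}}"

definition angleM :: "real^'d^'d \<Rightarrow> (real^'d) set \<Rightarrow> real" where
  "angleM M T = arccos (cos_angleM M T)"

text \<open>Hopf-Lax operator: nonzero vertices w_1..w_k of a common simplex are
  represented by a nonempty subset W of the nonzero vertices of some S in the mesh,
  with weights alpha on W.  Multiplication in ennreal satisfies 0 * infinity = 0.\<close>
definition HopfLax :: "real^'d^'d \<Rightarrow> (real^'d) set set \<Rightarrow> (real^'d \<Rightarrow> ennreal) \<Rightarrow> real^'d \<Rightarrow> ennreal" where
  "HopfLax M \<T> \<delta> z = Inf
     {ennreal (Mnorm M (\<Sum>w\<in>W. \<alpha> w *\<^sub>R w)) + (\<Sum>w\<in>W. ennreal (\<alpha> w) * \<delta> (z + w)) | S W \<alpha>.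
        S \<in> \<T> \<and> W \<subseteq> S - {0} \<and> W \<noteq> {} \<and> (\<forall>w\<in>W. \<alpha> w \<ge> 0) \<and> sum \<alpha> W = 1}"

definition super_solution :: "real^'d^'d \<Rightarrow> (real^'d) set set \<Rightarrow> (real^'d \<Rightarrow> ennreal) \<Rightarrow> bool" where
  "super_solution M \<T> \<delta> \<longleftrightarrow> \<delta> 0 = 0 \<and>
     (\<forall>z. lattice_pt z \<and> z \<noteq> 0 \<longrightarrow> \<delta> z \<ge> HopfLax M \<T> \<delta> z)"

definition cone_of :: "(real^'d) set \<Rightarrow> (real^'d) set" where
  "cone_of T = {r *\<^sub>R x | r x. r \<ge> 0 \<and> x \<in> convex hull T}"

definition betas :: "(real^'d) set \<Rightarrow> real^'d \<Rightarrow> (real^'d \<Rightarrow> nat)" where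
  "betas T z = (THE \<beta>. (\<forall>v. v \<notin> T - {0} \<longrightarrow> \<beta> v = 0) \<and>
                      z + (\<Sum>v\<in>T - {0}. real (\<beta> v) *\<^sub>R v) = 0)"

definition delta_plus :: "real^'d^'d \<Rightarrow> (real^'d) set \<Rightarrow> real^'d \<Rightarrow> ennreal" where
  "delta_plus M T z =
     (if - z \<notin> cone_of T then \<infinity>
      else ennreal (Mnorm M z + (sin (angleM M T))\<^sup>2 *
             (\<Sum>v\<in>T - {0}. (\<Sum>k=1..betas T z v. 1 / real k) * Mnorm M v)))"

end

theory Submission
  imports Defs
begin

text \<open>Write u = -z = sum beta_i v_i; the coefficients beta_i are natural numbers because T is a
  unimodular lattice simplex (its volume is 1/d!).  Bound the Hopf-Lax minimum by the choice of
  the vertices w with beta_w > 0 and the weights beta_w / B, B = sum beta_w.  Stepping from z to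
  z + w lowers beta_w by one, so delta_+(z + w) = |u - w| + sin^2 theta (H - |w| / beta_w) with
  H = sum s(beta_i) |v_i|.  As sum beta_w <u,w> = |u|^2, it remains to show
  beta_w (|u - w| - |u| + <u,w> / |u|) <= sin^2 theta |w| for each such w.  With e = u - w the left
  factor is (|u| |e| - <u,e>) / |u|, whose numerator is a Gram determinant divided by
  |u| |e| + <u,e>; the Gram determinants of (u,e) and (w,e) agree, and the latter is at most
  sin^2 theta |e|^2 |w|^2 because e lies in the cone over T.  Throughout, norms and inner products
  are those of M and theta = theta_M(T).\<close>

section \<open>Unimodularity of lattice simplices\<close>

text \<open>The volume formula for simplices (content_simplex) needs a well-ordered index type.  A copy of
  the finite index type, ordered through to_nat, serves for this; coordinates are transported to it
  by a relabelling which preserves Lebesgue measure.\<close>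

typedef 'a index_copy = "UNIV :: 'a set" by simp

instance index_copy :: (finite) finite
proof
  show "finite (UNIV :: 'a index_copy set)"
    by (simp add: type_definition.univ[OF type_definition_index_copy])
qed

instantiation index_copy :: (finite) linorder
begin

definition less_eq_index_copy :: "'a index_copy \<Rightarrow> 'a index_copy \<Rightarrow> bool"
  where "x \<le> y \<longleftrightarrow> to_nat (Rep_index_copy x) \<le> to_nat (Rep_index_copy y)"

definition less_index_copy :: "'a index_copy \<Rightarrow> 'a index_copy \<Rightarrow> bool"
  where "x < y \<longleftrightarrow> to_nat (Rep_index_copy x) < to_nat (Rep_index_copy y)"

instance
proof
  fix x y z :: "'a index_copy"
  show "x \<le> y \<Longrightarrow> y \<le> x \<Longrightarrow> x = y"
    unfolding less_eq_index_copy_def by (simp add: Rep_index_copy_inject)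
qed (auto simp: less_eq_index_copy_def less_index_copy_def)

end

instance index_copy :: (finite) wellorder
proof
  fix P :: "'a index_copy \<Rightarrow> bool" and a
  assume step: "\<And>x. (\<And>y. y < x \<Longrightarrow> P y) \<Longrightarrow> P x"
  show "P a"
  proof (induction a rule: measure_induct_rule[of "\<lambda>x. to_nat (Rep_index_copy x)"])
    case (less x)
    then show ?case
      by (rule step) (simp add: less_index_copy_def)
  qed
qed

lemma card_index_copy: "CARD('a index_copy) = CARD('a)"
  using type_definition.card[OF type_definition_index_copy] by simp

definition to_copy :: "real^'a \<Rightarrow> real^'a index_copy"
  where "to_copy x = (\<chi> j. x $ Rep_index_copy j)"

definition from_copy :: "real^'a index_copy \<Rightarrow> real^'a"
  where "from_copy y = (\<chi> i. y $ Abs_index_copy i)"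

lemma from_to_copy [simp]: "from_copy (to_copy x) = x"
  by (simp add: from_copy_def to_copy_def Abs_index_copy_inverse vec_eq_iff)

lemma to_from_copy [simp]: "to_copy (from_copy y) = y"
  by (simp add: from_copy_def to_copy_def Rep_index_copy_inverse vec_eq_iff)

lemma linear_to_copy: "linear to_copy"
  by (rule linearI) (auto simp: to_copy_def vec_eq_iff)

lemma linear_from_copy: "linear from_copy"
  by (rule linearI) (auto simp: from_copy_def vec_eq_iff)

lemma image_to_copy: "to_copy ` K = from_copy -` K"
  by (force simp: image_iff)

lemma bij_Abs_index_copy: "bij Abs_index_copy"
  by (metis Abs_index_copy_inverse Rep_index_copy_inverse UNIV_I bijI')

lemma inj_to_copy: "inj to_copy"
  by (metis from_to_copy injI)

lemma borel_measurable_to_copy: "to_copy \<in> borel_measurable borel"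
  by (intro borel_measurable_continuous_onI linear_continuous_on
      linear_to_copy[unfolded linear_conv_bounded_linear])

lemma borel_measurable_from_copy: "from_copy \<in> borel_measurable borel"
  by (intro borel_measurable_continuous_onI linear_continuous_on
      linear_from_copy[unfolded linear_conv_bounded_linear])

lemma distr_lborel_to_copy:
  "distr lborel borel to_copy = (lborel :: (real^'a::finite index_copy) measure)"
proof (rule lborel_eqI[symmetric])
  fix l u :: "real^'a index_copy"
  assume le: "\<And>b. b \<in> Basis \<Longrightarrow> l \<bullet> b \<le> u \<bullet> b"
  have box: "to_copy -` box l u = box (from_copy l) (from_copy u)"
    by (auto simp: mem_box_cart to_copy_def from_copy_def)
       (metis Abs_index_copy_inverse Rep_index_copy_inverse UNIV_I)+
  have "l $ j \<le> u $ j" for j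
    using le[of "axis j 1"] by (auto simp: Basis_vec_def inner_axis)
  then have "emeasure lborel (box (from_copy l) (from_copy u))
      = (\<Prod>i\<in>UNIV. u $ Abs_index_copy i - l $ Abs_index_copy i)"
    by (subst emeasure_lborel_box_eq)
       (auto simp: box_ne_empty from_copy_def Basis_vec_def inner_axis axis_eq_axis
          prod.UNION_disjoint)
  also have "\<dots> = (\<Prod>j\<in>UNIV. u $ j - l $ j)"
    using prod.reindex_bij_betw[OF bij_Abs_index_copy, of "\<lambda>j. u $ j - l $ j"] by simp
  also have "\<dots> = (\<Prod>b\<in>Basis. (u - l) \<bullet> b)"
    by (simp add: Basis_vec_def inner_axis axis_eq_axis prod.UNION_disjoint)
  finally show "emeasure (distr lborel borel to_copy) (box l u) = (\<Prod>b\<in>Basis. (u - l) \<bullet> b)"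
    by (simp add: emeasure_distr borel_measurable_to_copy box)
qed simp

lemma measure_to_copy_image:
  fixes K :: "(real^'a::finite) set"
  assumes "K \<in> sets borel"
  shows "measure lebesgue (to_copy ` K) = measure lebesgue K"
proof -
  have copy_borel: "to_copy ` K \<in> sets borel"
    unfolding image_to_copy using borel_measurable_from_copy assms by (rule measurable_sets_borel)
  have "measure lebesgue (to_copy ` K) = measure (distr lborel borel to_copy) (to_copy ` K)"
    using copy_borel by (simp add: distr_lborel_to_copy)
  also have "\<dots> = measure lborel K"
    using copy_borel
    by (simp add: measure_distr borel_measurable_to_copy inj_vimage_image_eq[OF inj_to_copy])
  finally show ?thesis
    using assms by simp
qed

lemma simplex_volume_det:
  fixes T :: "(real^'d) set" and g :: "'d index_copy \<Rightarrow> real^'d"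
  assumes fin: "finite T" and card: "card T = CARD('d) + 1" and zero: "0 \<in> T"
    and g: "bij_betw g UNIV (T - {0})"
  shows "measure lebesgue (convex hull T) = \<bar>det (\<chi> i j. to_copy (g j) $ i)\<bar> / fact CARD('d)"
proof -
  have inj: "inj_on (to_copy :: real^'d \<Rightarrow> _) T"
    using inj_to_copy by (rule inj_on_subset) simp
  have zero_copy: "to_copy (0 :: real^'d) = 0"
    by (simp add: to_copy_def vec_eq_iff)
  then have "to_copy ` T - {0} = to_copy ` (T - {0})"
    by (simp add: image_set_diff[OF inj_to_copy])
  then have bij: "bij_betw (to_copy \<circ> g) UNIV (to_copy ` T - {0})"
    using bij_betw_trans[OF g bij_betw_imageI[OF inj_on_subset[OF inj]]] by auto
  have card_copy: "card (to_copy ` T) = Suc CARD('d index_copy)"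
    using card card_image[OF inj] by (simp add: card_index_copy)
  have "0 \<in> to_copy ` T"
    using zero zero_copy by (metis image_eqI)
  note simplex = content_simplex[OF _ card_copy this bij]
  have "compact (convex hull T)"
    using fin by (rule finite_imp_compact_convex_hull)
  then have "measure lebesgue (convex hull T) = measure lebesgue (to_copy ` (convex hull T))"
    by (simp add: measure_to_copy_image compact_imp_closed borel_closed)
  also have "to_copy ` (convex hull T) = convex hull (to_copy ` T)"
    by (simp add: convex_hull_linear_image linear_to_copy)
  also have "measure lebesgue \<dots> = measure lborel (convex hull (to_copy ` T))"
    using fin by (simp add: finite_imp_compact_convex_hull compact_imp_closed borel_closed)
  also have "\<dots> = \<bar>det (\<chi> i j. (to_copy \<circ> g) j $ i - 0 $ i)\<bar> / fact CARD('d index_copy)"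
    by (rule simplex) (use fin in simp)
  finally show ?thesis
    by (simp add: card_index_copy)
qed

lemma Ints_unimodular_solution:
  fixes A :: "real^'n^'n"
  assumes A: "\<And>i j. A $ i $ j \<in> \<int>" and det: "\<bar>det A\<bar> = 1" and b: "\<And>i. (A *v x) $ i \<in> \<int>"
  shows "x $ k \<in> \<int>"
proof -
  have "x $ k * det A = det (\<chi> i j. if j = k then (A *v x) $ i else A $ i $ j)"
    by (rule cramer_lemma[symmetric])
  also have "\<dots> \<in> \<int>"
    unfolding det_def by (intro Ints_sum Ints_mult Ints_prod) (auto simp: A b)
  finally show ?thesis
    using det by (cases "det A \<ge> 0") (auto simp: abs_if)
qed

lemma lattice_simplex_coords_Ints:
  fixes T :: "(real^'d) set"
  assumes fin: "finite T" and card: "card T = CARD('d) + 1" and zero: "0 \<in> T"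
    and vol: "measure lebesgue (convex hull T) = 1 / fact CARD('d)"
    and lat: "\<forall>v\<in>T. lattice_pt v"
    and comb: "lattice_pt (\<Sum>v\<in>T - {0}. c v *\<^sub>R v)" and v: "v \<in> T - {0}"
  shows "c v \<in> \<int>"
proof -
  have "card (T - {0}) = CARD('d index_copy)"
    using fin card zero by (simp add: card_index_copy)
  then obtain g :: "'d index_copy \<Rightarrow> real^'d" where g: "bij_betw g UNIV (T - {0})"
    using fin finite_same_card_bij[of "UNIV :: 'd index_copy set" "T - {0}"] by auto
  define A where "A = (\<chi> i j. to_copy (g j) $ i)"
  have det: "\<bar>det A\<bar> = 1"
    using simplex_volume_det[OF fin card zero g] vol by (simp add: A_def)
  have "A *v (\<chi> j. c (g j)) = to_copy (\<Sum>v\<in>T - {0}. c v *\<^sub>R v)"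
    using sum.reindex_bij_betw[OF g, of "\<lambda>v. c v * v $ _"]
    by (simp add: vec_eq_iff A_def to_copy_def matrix_vector_mult_def mult.commute)
  then have "(A *v (\<chi> j. c (g j))) $ i \<in> \<int>" for i
    using comb by (simp add: to_copy_def lattice_pt_def)
  moreover have "A $ i $ j \<in> \<int>" for i j
    using g lat by (auto simp: A_def to_copy_def lattice_pt_def bij_betw_def)
  ultimately have "(\<chi> j. c (g j)) $ j \<in> \<int>" for j
    using Ints_unimodular_solution[OF _ det] by blast
  moreover obtain j where "v = g j"
    using g v by (auto simp: bij_betw_def)
  ultimately show ?thesis
    by simp
qed

lemma affine_independent_coords_unique:
  fixes T :: "'a::real_vector set"
  assumes indep: "\<not> affine_dependent T" and zero: "0 \<in> T" and fin: "finite T"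
    and eq: "(\<Sum>v\<in>T - {0}. c v *\<^sub>R v) = (\<Sum>v\<in>T - {0}. c' v *\<^sub>R v)" and v: "v \<in> T - {0}"
  shows "c v = c' v"
proof -
  have "\<not> dependent (T - {0})"
    using indep zero affine_dependent_iff_dependent[of 0 "T - {0}"] by (simp add: insert_absorb)
  then have "(\<Sum>v\<in>T - {0}. u v *\<^sub>R v) = 0 \<Longrightarrow> u v = 0" for u
    using fin v by (auto simp: dependent_finite)
  moreover have "(\<Sum>v\<in>T - {0}. (c v - c' v) *\<^sub>R v) = 0"
    using eq by (simp add: scaleR_diff_left sum_subtractf)
  ultimately show ?thesis
    by fastforce
qed

section \<open>The M-inner product\<close>

lemma Mip_add_right: "Mip M u (v + w) = Mip M u v + Mip M u w"
  by (simp add: Mip_def matrix_vector_right_distrib inner_add_right)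

lemma Mip_add_left: "Mip M (u + v) w = Mip M u w + Mip M v w"
  by (simp add: Mip_def inner_add_left)

lemma Mip_diff_left: "Mip M (u - v) w = Mip M u w - Mip M v w"
  by (simp add: Mip_def inner_diff_left)

lemma Mip_diff_right: "Mip M u (v - w) = Mip M u v - Mip M u w"
  by (simp add: Mip_def matrix_vector_mult_diff_distrib inner_diff_right)

lemma Mip_scaleR_left: "Mip M (c *\<^sub>R u) w = c * Mip M u w"
  by (simp add: Mip_def)

lemma Mip_scaleR_right: "Mip M u (c *\<^sub>R v) = c * Mip M u v"
  by (simp add: Mip_def matrix_vector_mult_scaleR)

lemma Mip_sum_left: "Mip M (\<Sum>x\<in>S. f x) w = (\<Sum>x\<in>S. Mip M (f x) w)"
  by (simp add: Mip_def inner_sum_left)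

lemma Mip_zero_left [simp]: "Mip M 0 w = 0"
  by (simp add: Mip_def)

lemma Mip_zero_right [simp]: "Mip M u 0 = 0"
  by (simp add: Mip_def)

lemma Mip_sum_right: "Mip M u (\<Sum>x\<in>S. f x) = (\<Sum>x\<in>S. Mip M u (f x))"
  by (induction S rule: infinite_finite_induct) (simp_all add: Mip_add_right)

lemma Mnorm_zero [simp]: "Mnorm M 0 = 0"
  by (simp add: Mnorm_def)

lemma Mip_commute:
  assumes "sym_posdef M"
  shows "Mip M u v = Mip M v u"
proof -
  have "Mip M u v = (u v* transpose M) \<bullet> v"
    using assms by (simp add: Mip_def sym_posdef_def dot_lmul_matrix)
  then show ?thesis
    using assms by (simp add: sym_posdef_def Mip_def inner_commute)
qed

lemma Mip_self_nonneg: "sym_posdef M \<Longrightarrow> 0 \<le> Mip M x x"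
  by (cases "x = 0") (auto simp: sym_posdef_def Mip_def less_imp_le)

lemma Mnorm_power2: "sym_posdef M \<Longrightarrow> (Mnorm M x)\<^sup>2 = Mip M x x"
  by (simp add: Mnorm_def Mip_self_nonneg)

lemma Mnorm_nonneg: "sym_posdef M \<Longrightarrow> 0 \<le> Mnorm M x"
  by (simp add: Mnorm_def Mip_self_nonneg)

lemma Mnorm_pos: "sym_posdef M \<Longrightarrow> x \<noteq> 0 \<Longrightarrow> 0 < Mnorm M x"
  by (simp add: Mnorm_def sym_posdef_def)

lemma Mnorm_scaleR: "Mnorm M (c *\<^sub>R x) = \<bar>c\<bar> * Mnorm M x"
  by (simp add: Mnorm_def Mip_scaleR_left Mip_scaleR_right real_sqrt_mult mult.assoc[symmetric])

lemma Mnorm_minus: "Mnorm M (- x) = Mnorm M x"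
  using Mnorm_scaleR[of M "-1" x] by simp

lemma Mip_Cauchy_Schwarz:
  assumes pos: "sym_posdef M"
  shows "(Mip M u v)\<^sup>2 \<le> Mip M u u * Mip M v v"
proof (cases "v = 0")
  case True
  then show ?thesis
    by (simp add: Mip_def)
next
  case False
  define t where "t = Mip M u v / Mip M v v"
  have v: "0 < Mip M v v"
    using pos False by (simp add: sym_posdef_def)
  have "0 \<le> Mip M (u - t *\<^sub>R v) (u - t *\<^sub>R v)"
    using pos by (rule Mip_self_nonneg)
  also have "\<dots> = Mip M u u - (Mip M u v)\<^sup>2 / Mip M v v"
    using v Mip_commute[OF pos, of v u]
    by (simp add: Mip_diff_left Mip_diff_right Mip_scaleR_left Mip_scaleR_right t_def
        field_simps power2_eq_square)
  finally show ?thesis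
    using v by (simp add: field_simps)
qed

lemma excess_bound_real:
  fixes a b R p s \<beta> :: real
  assumes a: "0 < a" and nonneg: "0 \<le> b" "0 \<le> R" "0 \<le> p" "0 \<le> s" "0 \<le> \<beta>"
    and \<beta>b: "\<beta> * b \<le> a" and R: "R \<le> a"
    and gram: "(a * R - p) * (a * R + p) \<le> s * b\<^sup>2 * R\<^sup>2"
  shows "\<beta> * (a * R - p) / a \<le> s * b"
proof (cases "a * R \<le> p")
  case True
  then have "\<beta> * (a * R - p) / a \<le> 0"
    using a nonneg by (simp add: divide_nonpos_pos mult_nonneg_nonpos)
  also have "0 \<le> s * b"
    using nonneg by simp
  finally show ?thesis .
next
  case False
  then have "0 < R"
    using a nonneg by (metis mult_zero_right order.not_eq_order_implies_strict)
  have "(a * R - p) * (a * R) \<le> (a * R - p) * (a * R + p)"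
    using False nonneg by (intro mult_left_mono) auto
  then have "((a * R - p) * a) * R \<le> (s * b\<^sup>2 * R) * R"
    using gram by (simp add: power2_eq_square algebra_simps)
  then have excess: "(a * R - p) * a \<le> s * b\<^sup>2 * R"
    using \<open>0 < R\<close> by (rule mult_right_le_imp_le)
  have "\<beta> * (a * R - p) / a = \<beta> * ((a * R - p) * a) / a\<^sup>2"
    using a by (simp add: power2_eq_square)
  also have "\<dots> \<le> \<beta> * (s * b\<^sup>2 * R) / a\<^sup>2"
    using excess nonneg by (intro divide_right_mono mult_left_mono) auto
  also have "\<dots> = s * b * ((\<beta> * b) * R) / a\<^sup>2"
    by (simp add: power2_eq_square algebra_simps)
  also have "\<dots> \<le> s * b * (a * a) / a\<^sup>2"
    using nonneg \<beta>b R by (intro divide_right_mono mult_left_mono mult_mono) auto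
  also have "\<dots> = s * b"
    using a by (simp add: power2_eq_square)
  finally show ?thesis .
qed

lemma Mnorm_excess_le:
  assumes pos: "sym_posdef M" and u: "u \<noteq> 0" and \<beta>: "1 \<le> \<beta>" and s: "0 \<le> s"
    and proj: "\<beta> * Mip M w w \<le> Mip M u w"
    and gram: "(Mnorm M (u - w))\<^sup>2 * (Mnorm M w)\<^sup>2 - (Mip M (u - w) w)\<^sup>2
                 \<le> s * ((Mnorm M (u - w))\<^sup>2 * (Mnorm M w)\<^sup>2)"
  shows "\<beta> * (Mnorm M (u - w) - Mnorm M u + Mip M u w / Mnorm M u) \<le> s * Mnorm M w"
proof -
  define e where "e = u - w"
  define a R b where "a = Mnorm M u" and "R = Mnorm M e" and "b = Mnorm M w"
  define p q where "p = Mip M u e" and "q = Mip M e w"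
  have u_eq: "u = e + w"
    by (simp add: e_def)
  have a2: "a\<^sup>2 = Mip M u u" and R2: "R\<^sup>2 = Mip M e e" and b2: "b\<^sup>2 = Mip M w w"
    using pos by (simp_all add: a_def R_def b_def Mnorm_power2)
  have sym: "Mip M w e = q"
    using pos by (simp add: q_def Mip_commute)
  have a0: "0 < a" and nonneg: "0 \<le> b" "0 \<le> R"
    using pos u by (simp_all add: a_def b_def R_def Mnorm_pos Mnorm_nonneg)
  have "b\<^sup>2 \<le> \<beta> * b\<^sup>2"
    using \<beta> mult_right_mono[of 1 \<beta> "b\<^sup>2"] by simp
  then have q0: "0 \<le> q"
    using proj b2 by (simp add: q_def e_def Mip_diff_left)
  have p_eq: "p = R\<^sup>2 + q"
    using R2 sym by (simp add: p_def u_eq Mip_add_left)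
  have a2_eq: "a\<^sup>2 = R\<^sup>2 + 2 * q + b\<^sup>2"
    using a2 R2 b2 sym by (simp add: u_eq Mip_add_left Mip_add_right q_def)
  have R: "R \<le> a"
    by (rule power2_le_imp_le) (use a2_eq q0 a0 in auto)
  have "(Mip M u w)\<^sup>2 \<le> (a * b)\<^sup>2"
    using Mip_Cauchy_Schwarz[OF pos, of u w] a2 b2 by (simp add: power_mult_distrib)
  then have uw: "Mip M u w \<le> a * b"
    by (rule power2_le_imp_le) (use a0 nonneg in auto)
  have \<beta>b: "\<beta> * b \<le> a"
  proof (cases "b = 0")
    case False
    have "(\<beta> * b) * b = \<beta> * b\<^sup>2"
      by (simp add: power2_eq_square)
    also have "\<dots> \<le> a * b"
      using proj uw b2 by simp
    finally have "(\<beta> * b) * b \<le> a * b" .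
    moreover have "0 < b"
      using False nonneg by simp
    ultimately show ?thesis
      by (rule mult_right_le_imp_le)
  qed (use a0 in simp)
  have "(a * R - p) * (a * R + p) = a\<^sup>2 * R\<^sup>2 - p\<^sup>2"
    by (simp add: algebra_simps power2_eq_square)
  also have "\<dots> = R\<^sup>2 * b\<^sup>2 - q\<^sup>2"
    unfolding a2_eq p_eq by (simp add: algebra_simps power2_eq_square)
  also have "\<dots> \<le> s * b\<^sup>2 * R\<^sup>2"
    using gram by (simp add: R_def b_def q_def e_def mult_ac)
  finally have gram': "(a * R - p) * (a * R + p) \<le> s * b\<^sup>2 * R\<^sup>2" .
  have "Mip M u w = a\<^sup>2 - p"
    using a2 by (simp add: p_def e_def Mip_diff_right)
  then have "Mnorm M (u - w) - Mnorm M u + Mip M u w / Mnorm M u = (a * R - p) / a"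
    using a0 by (simp add: a_def R_def e_def field_simps power2_eq_square)
  moreover have "\<beta> * (a * R - p) / a \<le> s * b"
    using \<beta> q0 p_eq s by (intro excess_bound_real[OF a0 nonneg _ s _ \<beta>b R gram']) auto
  ultimately show ?thesis
    by (simp add: b_def)
qed

section \<open>Angles of acute simplices\<close>

lemma cone_of_finite:
  fixes T :: "(real^'d) set"
  assumes fin: "finite T" and zero: "0 \<in> T"
  shows "y \<in> cone_of T \<longleftrightarrow> (\<exists>c. (\<forall>v\<in>T - {0}. 0 \<le> c v) \<and> y = (\<Sum>v\<in>T - {0}. c v *\<^sub>R v))"
proof
  assume "y \<in> cone_of T"
  then obtain r x where r: "0 \<le> r" and x: "x \<in> convex hull T" and y: "y = r *\<^sub>R x"
    by (auto simp: cone_of_def)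
  then obtain u where u: "\<forall>t\<in>T. 0 \<le> u t" and "x = (\<Sum>t\<in>T. u t *\<^sub>R t)"
    using convex_hull_finite[OF fin] by auto
  then have "x = (\<Sum>t\<in>T - {0}. u t *\<^sub>R t)"
    using sum.remove[OF fin zero, of "\<lambda>t. u t *\<^sub>R t"] by simp
  then have "y = (\<Sum>t\<in>T - {0}. (r * u t) *\<^sub>R t)"
    by (simp add: y scaleR_sum_right)
  then show "\<exists>c. (\<forall>v\<in>T - {0}. 0 \<le> c v) \<and> y = (\<Sum>v\<in>T - {0}. c v *\<^sub>R v)"
    using r u by (intro exI[of _ "\<lambda>t. r * u t"]) auto
next
  assume "\<exists>c. (\<forall>v\<in>T - {0}. 0 \<le> c v) \<and> y = (\<Sum>v\<in>T - {0}. c v *\<^sub>R v)"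
  then obtain c where c: "\<forall>v\<in>T - {0}. 0 \<le> c v" and y: "y = (\<Sum>v\<in>T - {0}. c v *\<^sub>R v)"
    by blast
  define S where "S = 1 + (\<Sum>v\<in>T - {0}. c v)"
  have "0 \<le> (\<Sum>v\<in>T - {0}. c v)"
    by (rule sum_nonneg) (use c in blast)
  then have S: "0 < S"
    by (simp add: S_def)
  \<comment> \<open>the apex 0 takes the remaining weight 1 / S\<close>
  define u where "u t = (if t = 0 then 1 else c t) / S" for t
  have "(\<Sum>t\<in>T. u t) = u 0 + (\<Sum>t\<in>T - {0}. c t / S)"
    unfolding sum.remove[OF fin zero]
    by (rule arg_cong[where f = "(+) _"], rule sum.cong) (auto simp: u_def)
  also have "\<dots> = 1"
    using S by (simp add: u_def S_def flip: sum_divide_distrib add_divide_distrib)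
  finally have "(\<Sum>t\<in>T. u t) = 1" .
  moreover have "(\<Sum>t\<in>T. u t *\<^sub>R t) = (\<Sum>t\<in>T - {0}. (1 / S) *\<^sub>R (c t *\<^sub>R t))"
    unfolding sum.remove[OF fin zero] by (simp, rule sum.cong) (auto simp: u_def)
  ultimately have "(1 / S) *\<^sub>R y \<in> convex hull T"
    using c S unfolding convex_hull_finite[OF fin] y scaleR_sum_right[symmetric]
    by (intro CollectI exI[of _ u]) (auto simp: u_def)
  moreover have "y = S *\<^sub>R ((1 / S) *\<^sub>R y)"
    using S by simp
  ultimately show "y \<in> cone_of T"
    using S unfolding cone_of_def by (intro CollectI exI conjI) (auto simp del: scaleR_scaleR)
qed

locale acute_simplex =
  fixes M :: "real^'d^'d" and T :: "(real^'d) set"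
  assumes posdef: "sym_posdef M" and finite_T: "finite T" and zero_in_T: "0 \<in> T"
    and acute: "\<And>v w. v \<in> T - {0} \<Longrightarrow> w \<in> T - {0} \<Longrightarrow> 0 \<le> Mip M v w"
begin

lemma Mip_convex_hull_nonneg:
  assumes "x \<in> convex hull T" and "y \<in> convex hull T"
  shows "0 \<le> Mip M x y"
proof -
  obtain c d where c: "\<forall>t\<in>T. 0 \<le> c t" "x = (\<Sum>t\<in>T. c t *\<^sub>R t)"
    and d: "\<forall>t\<in>T. 0 \<le> d t" "y = (\<Sum>t\<in>T. d t *\<^sub>R t)"
    using assms convex_hull_finite[OF finite_T] by auto
  have "0 \<le> Mip M s t" if "s \<in> T" "t \<in> T" for s t
    using acute[of s t] that by (cases "s = 0 \<or> t = 0") auto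
  then show ?thesis
    using c d by (auto simp: Mip_sum_left Mip_sum_right Mip_scaleR_left Mip_scaleR_right
        intro!: sum_nonneg mult_nonneg_nonneg)
qed

lemma cos_angleM_le:
  assumes "u \<in> convex hull T - {0}" and "v \<in> convex hull T - {0}"
  shows "cos_angleM M T \<le> Mip M u v / (Mnorm M u * Mnorm M v)"
  unfolding cos_angleM_def
proof (rule cInf_lower)
  show "bdd_below {Mip M u v / (Mnorm M u * Mnorm M v) |u v.
      u \<in> convex hull T - {0} \<and> v \<in> convex hull T - {0}}"
    by (rule bdd_belowI[of _ 0])
       (auto intro!: divide_nonneg_nonneg Mip_convex_hull_nonneg simp: Mnorm_nonneg posdef)
qed (use assms in blast)

lemma cos_angleM_nonneg:
  assumes "w \<in> T - {0}"
  shows "0 \<le> cos_angleM M T"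
  unfolding cos_angleM_def
proof (rule cInf_greatest)
  show "{Mip M u v / (Mnorm M u * Mnorm M v) |u v.
      u \<in> convex hull T - {0} \<and> v \<in> convex hull T - {0}} \<noteq> {}"
    using assms hull_inc[of w T] by blast
qed (auto intro!: divide_nonneg_nonneg Mip_convex_hull_nonneg simp: Mnorm_nonneg posdef)

lemma cos_angleM_le_one:
  assumes "w \<in> T - {0}"
  shows "cos_angleM M T \<le> 1"
proof -
  have "cos_angleM M T \<le> Mip M w w / (Mnorm M w * Mnorm M w)"
    using assms hull_inc[of w T] by (intro cos_angleM_le) auto
  also have "\<dots> = 1"
    using assms Mnorm_pos[OF posdef, of w]
    by (simp flip: Mnorm_power2[OF posdef] add: power2_eq_square)
  finally show ?thesis .
qed

lemma sin_angleM_power2: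
  assumes "w \<in> T - {0}"
  shows "(sin (angleM M T))\<^sup>2 = 1 - (cos_angleM M T)\<^sup>2"
  using cos_angleM_nonneg[OF assms] cos_angleM_le_one[OF assms]
  by (simp add: angleM_def sin_arccos_abs abs_square_le_1)

lemma cone_gram_le:
  assumes y: "y \<in> cone_of T" and w: "w \<in> T - {0}"
  shows "(Mnorm M y)\<^sup>2 * (Mnorm M w)\<^sup>2 - (Mip M y w)\<^sup>2
           \<le> (sin (angleM M T))\<^sup>2 * ((Mnorm M y)\<^sup>2 * (Mnorm M w)\<^sup>2)"
proof (cases "y = 0")
  case False
  obtain r x where r: "0 \<le> r" and x: "x \<in> convex hull T" and y_eq: "y = r *\<^sub>R x"
    using y by (auto simp: cone_of_def)
  have "x \<noteq> 0" "r \<noteq> 0"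
    using False y_eq by auto
  define c where "c = Mip M x w / (Mnorm M x * Mnorm M w)"
  have C: "0 \<le> cos_angleM M T" "cos_angleM M T \<le> c"
    using cos_angleM_nonneg[OF w] cos_angleM_le[of x w] x w \<open>x \<noteq> 0\<close> hull_inc[of w T]
    by (auto simp: c_def)
  have "0 < Mnorm M x" "0 < Mnorm M w"
    using \<open>x \<noteq> 0\<close> w Mnorm_pos[OF posdef] by auto
  then have "Mip M y w = c * (Mnorm M y * Mnorm M w)"
    using y_eq r by (simp add: c_def Mip_scaleR_left Mnorm_scaleR)
  define Y where "Y = (Mnorm M y)\<^sup>2 * (Mnorm M w)\<^sup>2"
  have "(Mip M y w)\<^sup>2 = c\<^sup>2 * Y"
    unfolding \<open>Mip M y w = _\<close> Y_def by (simp add: power_mult_distrib)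
  moreover have "(cos_angleM M T)\<^sup>2 * Y \<le> c\<^sup>2 * Y"
    using power_mono[OF C(2) C(1), of 2] by (rule mult_right_mono) (simp add: Y_def)
  moreover have "(1 - (cos_angleM M T)\<^sup>2) * Y = Y - (cos_angleM M T)\<^sup>2 * Y"
    by (simp add: left_diff_distrib)
  ultimately show ?thesis
    unfolding sin_angleM_power2[OF w] Y_def[symmetric] by linarith
qed simp

end

section \<open>The super-solution\<close>

lemma sum_cong_except_one:
  fixes f g :: "'a \<Rightarrow> 'b::ab_group_add"
  assumes "finite A" and "x \<in> A" and "\<And>y. y \<in> A \<Longrightarrow> y \<noteq> x \<Longrightarrow> f y = g y"
  shows "sum f A = sum g A - g x + f x"
  using sum.remove[OF assms(1,2), of f] sum.remove[OF assms(1,2), of g]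
    sum.cong[of "A - {x}" "A - {x}" f g] assms(3)
  by simp

lemma HopfLax_le_real:
  assumes posdef: "sym_posdef M" and "S \<in> \<T>" and "W \<subseteq> S - {0}" and "W \<noteq> {}"
    and \<alpha>: "\<forall>w\<in>W. 0 \<le> \<alpha> w" and "sum \<alpha> W = 1"
    and d: "\<And>w. w \<in> W \<Longrightarrow> \<delta> (z + w) = ennreal (d w)" "\<And>w. w \<in> W \<Longrightarrow> 0 \<le> d w"
  shows "HopfLax M \<T> \<delta> z \<le> ennreal (Mnorm M (\<Sum>w\<in>W. \<alpha> w *\<^sub>R w) + (\<Sum>w\<in>W. \<alpha> w * d w))"
proof -
  have "HopfLax M \<T> \<delta> z
      \<le> ennreal (Mnorm M (\<Sum>w\<in>W. \<alpha> w *\<^sub>R w)) + (\<Sum>w\<in>W. ennreal (\<alpha> w) * \<delta> (z + w))"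
    unfolding HopfLax_def by (rule Inf_lower) (use assms in blast)
  also have "(\<Sum>w\<in>W. ennreal (\<alpha> w) * \<delta> (z + w)) = (\<Sum>w\<in>W. ennreal (\<alpha> w * d w))"
    using \<alpha> d by (intro sum.cong refl) (subst ennreal_mult; simp)
  also have "\<dots> = ennreal (\<Sum>w\<in>W. \<alpha> w * d w)"
    using \<alpha> d by (intro sum_ennreal) simp
  also have "ennreal (Mnorm M (\<Sum>w\<in>W. \<alpha> w *\<^sub>R w)) + \<dots>
      = ennreal (Mnorm M (\<Sum>w\<in>W. \<alpha> w *\<^sub>R w) + (\<Sum>w\<in>W. \<alpha> w * d w))"
    using \<alpha> d posdef
    by (intro ennreal_plus[symmetric] sum_nonneg mult_nonneg_nonneg Mnorm_nonneg) auto
  finally show ?thesis .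
qed

lemma weighted_average_le:
  fixes \<beta> R g b :: "'a \<Rightarrow> real"
  assumes \<beta>: "\<forall>w\<in>W. 0 < \<beta> w" and B: "B = (\<Sum>w\<in>W. \<beta> w)" "0 < B" and a: "0 < a"
    and g: "(\<Sum>w\<in>W. \<beta> w * g w) = a\<^sup>2"
    and excess: "\<And>w. w \<in> W \<Longrightarrow> \<beta> w * (R w - a + g w / a) \<le> s * b w"
  shows "a / B + (\<Sum>w\<in>W. \<beta> w / B * (R w + s * (H - b w / \<beta> w))) \<le> a + s * H"
proof -
  have "(\<Sum>w\<in>W. \<beta> w / B * (R w + s * (H - b w / \<beta> w)))
      = (\<Sum>w\<in>W. (\<beta> w * R w + s * H * \<beta> w - s * b w) / B)"
    by (rule sum.cong) (use \<beta> in \<open>auto simp: field_simps\<close>)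
  also have "\<dots> \<le> (\<Sum>w\<in>W. (\<beta> w * a - \<beta> w * g w / a + s * H * \<beta> w) / B)"
    using B excess by (intro sum_mono divide_right_mono) (force simp: algebra_simps)+
  also have "\<dots> = a - a / B + s * H"
    using B a
    by (simp add: g sum.distrib sum_subtractf sum_distrib_left[symmetric]
        sum_distrib_right[symmetric] sum_divide_distrib[symmetric] field_simps power2_eq_square)
  finally show ?thesis
    by simp
qed

locale reduced_simplex = acute_simplex M T for M :: "real^'d^'d" and T +
  assumes card_T: "card T = CARD('d) + 1"
    and independent_T: "\<not> affine_dependent T"
    and volume_T: "measure lebesgue (convex hull T) = 1 / fact CARD('d)"
    and lattice_T: "\<forall>v\<in>T. lattice_pt v"
begin

lemma betas_comb:
  fixes \<beta> :: "real^'d \<Rightarrow> nat"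
  assumes "v \<in> T - {0}"
  shows "betas T (- (\<Sum>v\<in>T - {0}. real (\<beta> v) *\<^sub>R v)) v = \<beta> v"
proof -
  define \<beta>0 where "\<beta>0 v = (if v \<in> T - {0} then \<beta> v else 0)" for v
  have comb: "(\<Sum>v\<in>T - {0}. real (\<beta>0 v) *\<^sub>R v) = (\<Sum>v\<in>T - {0}. real (\<beta> v) *\<^sub>R v)"
    by (rule sum.cong) (simp_all add: \<beta>0_def)
  have "betas T (- (\<Sum>v\<in>T - {0}. real (\<beta> v) *\<^sub>R v)) = \<beta>0"
    unfolding betas_def
  proof (rule the_equality)
    fix \<beta>' :: "real^'d \<Rightarrow> nat"
    assume \<beta>': "(\<forall>v. v \<notin> T - {0} \<longrightarrow> \<beta>' v = 0) \<and>
      - (\<Sum>v\<in>T - {0}. real (\<beta> v) *\<^sub>R v) + (\<Sum>v\<in>T - {0}. real (\<beta>' v) *\<^sub>R v) = 0"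
    then have "real (\<beta>' v) = real (\<beta> v)" if "v \<in> T - {0}" for v
      using that by (intro affine_independent_coords_unique[OF independent_T zero_in_T finite_T])
        (simp_all add: add_eq_0_iff)
    then show "\<beta>' = \<beta>0"
      using \<beta>' by (auto simp: \<beta>0_def fun_eq_iff)
  qed (simp add: \<beta>0_def comb)
  then show ?thesis
    using assms by (simp add: \<beta>0_def)
qed

lemma comb_in_cone: "(\<Sum>v\<in>T - {0}. real (\<beta> v) *\<^sub>R v) \<in> cone_of T"
  unfolding cone_of_finite[OF finite_T zero_in_T] by (intro exI[of _ "\<lambda>v. real (\<beta> v)"]) auto

lemma delta_plus_comb:
  fixes \<beta> :: "real^'d \<Rightarrow> nat"
  shows "delta_plus M T (- (\<Sum>v\<in>T - {0}. real (\<beta> v) *\<^sub>R v))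
       = ennreal (Mnorm M (\<Sum>v\<in>T - {0}. real (\<beta> v) *\<^sub>R v)
                  + (sin (angleM M T))\<^sup>2 * (\<Sum>v\<in>T - {0}. harm (\<beta> v) * Mnorm M v))"
proof -
  have "(\<Sum>v\<in>T - {0}. (\<Sum>k = 1..betas T (- (\<Sum>v\<in>T - {0}. real (\<beta> v) *\<^sub>R v)) v. 1 / real k) * Mnorm M v)
      = (\<Sum>v\<in>T - {0}. harm (\<beta> v) * Mnorm M v)"
    by (rule sum.cong) (simp_all add: betas_comb harm_def inverse_eq_divide)
  then show ?thesis
    using comb_in_cone[of \<beta>] by (simp add: delta_plus_def Mnorm_minus)
qed

lemma lattice_cone_nat_coords:
  assumes "lattice_pt y" and "y \<in> cone_of T"
  obtains \<beta> :: "real^'d \<Rightarrow> nat" where "y = (\<Sum>v\<in>T - {0}. real (\<beta> v) *\<^sub>R v)"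
proof -
  obtain c where c: "\<forall>v\<in>T - {0}. 0 \<le> c v" and y: "y = (\<Sum>v\<in>T - {0}. c v *\<^sub>R v)"
    using assms(2) cone_of_finite[OF finite_T zero_in_T] by blast
  have "c v \<in> \<int>" if "v \<in> T - {0}" for v
    using assms(1) y that finite_T card_T zero_in_T volume_T lattice_T
    by (intro lattice_simplex_coords_Ints) auto
  then have "real (nat \<lfloor>c v\<rfloor>) = c v" if "v \<in> T - {0}" for v
    using c that by (metis Ints_cases floor_of_int of_int_of_nat_eq nat_0_le of_int_0_le_iff)
  then have "y = (\<Sum>v\<in>T - {0}. real (nat \<lfloor>c v\<rfloor>) *\<^sub>R v)"
    unfolding y by (intro sum.cong) simp_all
  then show ?thesis
    by (rule that)
qed

lemma comb_decrement:
  fixes \<beta> :: "real^'d \<Rightarrow> nat"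
  assumes "w \<in> T - {0}" and "0 < \<beta> w"
  shows "(\<Sum>v\<in>T - {0}. real ((\<beta>(w := \<beta> w - 1)) v) *\<^sub>R v) = (\<Sum>v\<in>T - {0}. real (\<beta> v) *\<^sub>R v) - w"
  using assms finite_T
  by (subst sum_cong_except_one[where x = w and g = "\<lambda>v. real (\<beta> v) *\<^sub>R v"])
     (auto simp: of_nat_diff algebra_simps)

lemma harm_decrement:
  fixes \<beta> :: "real^'d \<Rightarrow> nat"
  assumes "w \<in> T - {0}" and "0 < \<beta> w"
  shows "(\<Sum>v\<in>T - {0}. harm ((\<beta>(w := \<beta> w - 1)) v) * Mnorm M v)
       = (\<Sum>v\<in>T - {0}. harm (\<beta> v) * Mnorm M v) - Mnorm M w / real (\<beta> w)"
proof -
  have "harm (\<beta> w) = harm (\<beta> w - 1) + 1 / real (\<beta> w)"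
    using harm_Suc[of "\<beta> w - 1"] assms(2) by (simp add: inverse_eq_divide)
  then show ?thesis
    using assms finite_T
    by (subst sum_cong_except_one[where x = w and g = "\<lambda>v. harm (\<beta> v) * Mnorm M v"])
       (auto simp: algebra_simps)
qed

lemma delta_plus_decrement:
  fixes \<beta> :: "real^'d \<Rightarrow> nat"
  assumes "w \<in> T - {0}" and "0 < \<beta> w"
  shows "delta_plus M T (- (\<Sum>v\<in>T - {0}. real (\<beta> v) *\<^sub>R v) + w)
       = ennreal (Mnorm M ((\<Sum>v\<in>T - {0}. real (\<beta> v) *\<^sub>R v) - w) + (sin (angleM M T))\<^sup>2 *
                  ((\<Sum>v\<in>T - {0}. harm (\<beta> v) * Mnorm M v) - Mnorm M w / real (\<beta> w)))"
  using delta_plus_comb[of "\<beta>(w := \<beta> w - 1)"]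
  unfolding comb_decrement[of w \<beta>, OF assms] harm_decrement[of w \<beta>, OF assms] by simp

lemma comb_excess_le:
  fixes \<beta> :: "real^'d \<Rightarrow> nat"
  assumes u: "u = (\<Sum>v\<in>T - {0}. real (\<beta> v) *\<^sub>R v)" "u \<noteq> 0" and w: "w \<in> T - {0}" "0 < \<beta> w"
  shows "real (\<beta> w) * (Mnorm M (u - w) - Mnorm M u + Mip M u w / Mnorm M u)
           \<le> (sin (angleM M T))\<^sup>2 * Mnorm M w"
proof (rule Mnorm_excess_le[OF posdef u(2)])
  show "1 \<le> real (\<beta> w)"
    using w by simp
  show "real (\<beta> w) * Mip M w w \<le> Mip M u w"
    unfolding u(1) Mip_sum_left Mip_scaleR_left
    by (rule member_le_sum[of w, OF w(1)]) (use acute w finite_T in auto)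
  have "u - w \<in> cone_of T"
    using comb_in_cone[of "\<beta>(w := \<beta> w - 1)"] unfolding comb_decrement[of w \<beta>, OF w] u(1) .
  then show "(Mnorm M (u - w))\<^sup>2 * (Mnorm M w)\<^sup>2 - (Mip M (u - w) w)\<^sup>2
               \<le> (sin (angleM M T))\<^sup>2 * ((Mnorm M (u - w))\<^sup>2 * (Mnorm M w)\<^sup>2)"
    using w(1) by (rule cone_gram_le)
qed simp

lemma HopfLax_delta_plus_le:
  fixes \<beta> :: "real^'d \<Rightarrow> nat"
  assumes T: "T \<in> \<T>" and u: "u = (\<Sum>v\<in>T - {0}. real (\<beta> v) *\<^sub>R v)" and "u \<noteq> 0"
  shows "HopfLax M \<T> (delta_plus M T) (- u) \<le> delta_plus M T (- u)"
proof -
  define s where "s = (sin (angleM M T))\<^sup>2"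
  define H where "H = (\<Sum>v\<in>T - {0}. harm (\<beta> v) * Mnorm M v)"
  define W where "W = {v \<in> T - {0}. 0 < \<beta> v}"
  define B where "B = (\<Sum>w\<in>W. real (\<beta> w))"
  define D where "D w = Mnorm M (u - w) + s * (H - Mnorm M w / real (\<beta> w))" for w
  have W: "W \<subseteq> T - {0}" "finite W"
    using finite_T by (auto simp: W_def)
  have uW: "u = (\<Sum>w\<in>W. real (\<beta> w) *\<^sub>R w)"
    unfolding u W_def using finite_T by (intro sum.mono_neutral_right) auto
  then have "W \<noteq> {}"
    using \<open>u \<noteq> 0\<close> by auto
  then have B: "0 < B"
    unfolding B_def using W by (intro sum_pos) (auto simp: W_def)
  have delta_w: "delta_plus M T (- u + w) = ennreal (D w)" if "w \<in> W" for w
    using delta_plus_decrement[of w \<beta>] that by (simp add: W_def D_def u s_def H_def)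
  have D: "0 \<le> D w" if "w \<in> W" for w
  proof -
    have w: "w \<in> T - {0}" "0 < \<beta> w"
      using that by (simp_all add: W_def)
    have "0 \<le> (\<Sum>v\<in>T - {0}. harm ((\<beta>(w := \<beta> w - 1)) v) * Mnorm M v)"
      using posdef by (intro sum_nonneg mult_nonneg_nonneg harm_nonneg Mnorm_nonneg)
    also have "\<dots> = H - Mnorm M w / real (\<beta> w)"
      unfolding H_def by (rule harm_decrement[of w \<beta>, OF w])
    finally show ?thesis
      using posdef by (simp add: D_def s_def Mnorm_nonneg)
  qed
  have "(\<Sum>w\<in>W. (real (\<beta> w) / B) *\<^sub>R w) = (1 / B) *\<^sub>R u"
    unfolding uW scaleR_sum_right by (rule sum.cong) simp_all
  then have "HopfLax M \<T> (delta_plus M T) (- u)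
      \<le> ennreal (Mnorm M u / B + (\<Sum>w\<in>W. real (\<beta> w) / B * D w))"
    using HopfLax_le_real[OF posdef T W(1) \<open>W \<noteq> {}\<close>,
        of "\<lambda>w. real (\<beta> w) / B" "delta_plus M T" "- u" D] B delta_w D
    by (simp add: Mnorm_scaleR B_def flip: sum_divide_distrib)
  also have "\<dots> \<le> ennreal (Mnorm M u + s * H)"
    unfolding D_def
  proof (rule ennreal_leI, rule weighted_average_le[where \<beta> = "\<lambda>w. real (\<beta> w)", OF _ B_def B])
    show "0 < Mnorm M u"
      using posdef \<open>u \<noteq> 0\<close> by (rule Mnorm_pos)
    show "(\<Sum>w\<in>W. real (\<beta> w) * Mip M u w) = (Mnorm M u)\<^sup>2"
      using posdef by (simp add: Mnorm_power2 uW Mip_sum_right Mip_scaleR_right)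
    show "real (\<beta> w) * (Mnorm M (u - w) - Mnorm M u + Mip M u w / Mnorm M u) \<le> s * Mnorm M w"
      if "w \<in> W" for w
      using comb_excess_le[OF u \<open>u \<noteq> 0\<close>] that by (simp add: W_def s_def)
  qed (auto simp: W_def)
  also have "\<dots> = delta_plus M T (- u)"
    by (simp add: delta_plus_comb u s_def H_def)
  finally show ?thesis .
qed

end

lemma reduced_simplex_of_mesh:
  fixes M :: "real^'d^'d" and T :: "(real^'d) set"
  assumes "sym_posdef M" and "M_reduced_mesh M \<T>" and "T \<in> \<T>"
  shows "reduced_simplex M T"
proof -
  have "finite T" "card T = CARD('d) + 1" "\<not> affine_dependent T" "0 \<in> T"
    "measure lebesgue (convex hull T) = 1 / fact CARD('d)" "\<forall>v\<in>T. lattice_pt v"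
    "\<forall>v\<in>T - {0}. \<forall>w\<in>T - {0}. 0 \<le> Mip M v w"
    using assms(2,3) unfolding M_reduced_mesh_def by blast+
  with assms(1) show ?thesis
    by unfold_locales auto
qed

theorem proposition1p8:
  fixes M :: "real^'d^'d" and \<T> :: "(real^'d) set set" and T :: "(real^'d) set"
  assumes "sym_posdef M"
    and "M_reduced_mesh M \<T>"
    and "T \<in> \<T>"
  shows "super_solution M \<T> (delta_plus M T)"
proof -
  interpret reduced_simplex M T
    using assms by (rule reduced_simplex_of_mesh)
  have "delta_plus M T 0 = 0"
    using delta_plus_comb[of "\<lambda>_. 0"] by (simp add: harm_def)
  moreover have "HopfLax M \<T> (delta_plus M T) z \<le> delta_plus M T z" if "lattice_pt z" "z \<noteq> 0" for z
  proof (cases "- z \<in> cone_of T")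
    case True
    have "lattice_pt (- z)"
      using that(1) by (simp add: lattice_pt_def)
    then obtain \<beta> where \<beta>: "- z = (\<Sum>v\<in>T - {0}. real (\<beta> v) *\<^sub>R v)"
      using True by (rule lattice_cone_nat_coords)
    then have "z = - (\<Sum>v\<in>T - {0}. real (\<beta> v) *\<^sub>R v)"
      by (simp add: \<beta>[symmetric])
    then show ?thesis
      using HopfLax_delta_plus_le[OF assms(3) refl, of \<beta>] that(2) by simp
  qed (simp add: delta_plus_def)
  ultimately show ?thesis
    unfolding super_solution_def by blast
qed

end
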